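(* Let $C>0$, $L>0$, $R\neq 0$, $\mu\in\mathbb{R}$, $h>0$ and let $\hat q:\mathbb{R}\to\mathbb{R}$ be any function. Suppose real sequences $v_{C,k},i_{C,k},i_{L,k},v_{L,k},v_{R,k},i_{R,k},v_{M,k},i_{M,k},\varphi_{M,k}$, $k=0,1,2,\dots$, satisfy for all $k$: $$i_{C,k}=C\frac{v_{C,k+1}-v_{C,k}}{h},\quad v_{L,k}=L\frac{i_{L,k+1}-i_{L,k}}{h},\quad v_{R,k}=Ri_{R,k},$$ $$i_{M,k}=\frac{\hat q(\varphi_{M,k+1})-\hat q(\varphi_{M,k})}{h},\quad \varphi_{M,k+1}=\varphi_{M,k}+hv_{M,k},$$ $$i_{L,k}=i_{M,k}+i_{C,k},\quad i_{L,k}=i_{R,k},\quad v_{C,k}+v_{R,k}+v_{L,k}-\mu v_{C,k}=0,\quad v_{C,k}=v_{M,k}.$$ Then: 1) $(v_{C,k},i_{L,k},\varphi_{M,k})$ is an orbit of the three-dimensional map $$\begin{aligned} v_{C,k+1}&=v_{C,k}-\tfrac{1}{C}\big(\hat q(\varphi_{M,k}+hv_{C,k})-\hat q(\varphi_{M,k})\big)+\tfrac{h}{C}i_{L,k},\\ i_{L,k+1}&=\big(1-\tfrac{Rh}{L}\big)i_{L,k}+\tfrac{h}{L}(\mu-1)v_{C,k},\\ \varphi_{M,k+1}&=\varphi_{M,k}+hv_{C,k}.\end{aligned}$$ 2) For any step size $h>0$, the function $\Theta_{MLC}(v_C,i_L,\varphi_M)=Cv_C+\frac{Li_L}{R}+\hat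 q(\varphi_M)+\frac{1-\mu}{R}\varphi_M$ is a first integral of this map, i.e. it takes the same value at $k+1$ as at $k$ for all $k\ge0$ along every orbit. 3) Consequently $\mathbb{R}^3$ is foliated into the invariant sets $\mathcal{M}_{MLC}(Q_0)=\{(v_C,i_L,\varphi_M)\in\mathbb{R}^3:\Theta_{MLC}(v_C,i_L,\varphi_M)=Q_0\}$, $Q_0\in\mathbb{R}$, and along any orbit of the map lying in $\mathcal{M}_{MLC}(Q_0)$, setting $q^0_{L,k}=h\sum_{j=0}^{k-1}i_{L,j}$ and $y_k=q^0_{L,k}+\frac{\mu-1}{R}\varphi_{M,0}-\frac{L}{R}i_{L,0}$, the pair $(\varphi_{M,k},y_k)$ obeys the two-dimensional map $$\varphi_{M,k+1}=\varphi_{M,k}+\tfrac{h}{C}y_k-\tfrac{h}{C}\hat q(\varphi_{M,k})+\tfrac{h}{C}Q_0,\qquad y_{k+1}=\big(1-\tfrac{hR}{L}\big)y_k+\tfrac{h}{L}(\mu-1)\varphi_{M,k}.$$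
   Context: These equations model a discrete-time memristor Murali-Lakshmanan-Chua circuit: a capacitor $C$ in parallel with a flux-controlled memristor $q_M=\hat q(\varphi_M)$, connected to a series branch containing a resistor $R$, an inductor $L$ and a voltage-controlled voltage source of value $\mu v_C$, discretized with step size $h$. The quantity $q^0_{L,k}$ is the (discrete) incremental charge of the inductor. *)

theory Defs
  imports Complex_Main
begin

definition MLC_map ::
  "real \<Rightarrow> real \<Rightarrow> real \<Rightarrow> real \<Rightarrow> real \<Rightarrow> (real \<Rightarrow> real)
   \<Rightarrow> real \<times> real \<times> real \<Rightarrow> real \<times> real \<times> real" where
  "MLC_map h C L R \<mu> qhat = (\<lambda>(v, i, \<phi>).
     (v - (1 / C) * (qhat (\<phi> + h * v) - qhat \<phi>) + (h / C) * i,
      (1 - R * h / L) * i + (h / L) * (\<mu> - 1) * v,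
      \<phi> + h * v))"

definition Theta_MLC ::
  "real \<Rightarrow> real \<Rightarrow> real \<Rightarrow> real \<Rightarrow> (real \<Rightarrow> real) \<Rightarrow> real \<times> real \<times> real \<Rightarrow> real" where
  "Theta_MLC C L R \<mu> qhat = (\<lambda>(v, i, \<phi>).
     C * v + L * i / R + qhat \<phi> + (1 - \<mu>) / R * \<phi>)"

definition M_MLC ::
  "real \<Rightarrow> real \<Rightarrow> real \<Rightarrow> real \<Rightarrow> (real \<Rightarrow> real) \<Rightarrow> real \<Rightarrow> (real \<times> real \<times> real) set" where
  "M_MLC C L R \<mu> qhat Q0 = {p. Theta_MLC C L R \<mu> qhat p = Q0}"

end

theory Submission
  imports Defs
begin

text \<open>
  Eliminating iC, iM, vR, vL, vM from the circuit equations leaves the map. Along the map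
  C \<Delta>vC = - \<Delta>qhat(\<phi>M) + h iL and (L/R) \<Delta>iL = - h iL - ((1 - \<mu>)/R) \<Delta>\<phi>M,
  so the increments of the four terms of Theta_MLC cancel, whatever the step size.
  The second identity also telescopes: the charge h (iL(0) + ... + iL(k - 1)) is the
  increment of ((\<mu> - 1) \<phi>M - L iL)/R, so y(k) = ((\<mu> - 1) \<phi>M(k) - L iL(k))/R.
  On the leaf Theta_MLC = Q0 this gives C vC(k) = Q0 - qhat(\<phi>M(k)) + y(k), which
  eliminates vC and iL in favour of (\<phi>M, y).
\<close>

lemma circuit_orbit_MLC_map:
  fixes C L R \<mu> h :: real and qhat :: "real \<Rightarrow> real"
    and vC iC iL vL vR iR vM iM \<phi>M :: "nat \<Rightarrow> real"
  assumes "C \<noteq> 0" "L \<noteq> 0" "h \<noteq> 0"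
    and capacitor: "\<And>k. iC k = C * (vC (k + 1) - vC k) / h"
    and inductor: "\<And>k. vL k = L * (iL (k + 1) - iL k) / h"
    and resistor: "\<And>k. vR k = R * iR k"
    and memristor: "\<And>k. iM k = (qhat (\<phi>M (k + 1)) - qhat (\<phi>M k)) / h"
    and flux: "\<And>k. \<phi>M (k + 1) = \<phi>M k + h * vM k"
    and KCL1: "\<And>k. iL k = iM k + iC k"
    and KCL2: "\<And>k. iL k = iR k"
    and KVL: "\<And>k. vC k + vR k + vL k - \<mu> * vC k = 0"
    and KVL2: "\<And>k. vC k = vM k"
  shows "(vC (k + 1), iL (k + 1), \<phi>M (k + 1)) = MLC_map h C L R \<mu> qhat (vC k, iL k, \<phi>M k)"
proof -
  have flux': "\<phi>M (k + 1) = \<phi>M k + h * vC k"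
    using flux KVL2 by simp
  have "iL k = ((qhat (\<phi>M k + h * vC k) - qhat (\<phi>M k)) + C * (vC (k + 1) - vC k)) / h"
    using KCL1[of k] memristor[of k] capacitor[of k] flux' by (simp add: add_divide_distrib)
  then have v_step: "vC (k + 1) = vC k - (1 / C) * (qhat (\<phi>M k + h * vC k) - qhat (\<phi>M k)) + (h / C) * iL k"
    using \<open>C \<noteq> 0\<close> \<open>h \<noteq> 0\<close> by (simp add: field_simps)
  have "vC k + R * iL k + L * (iL (k + 1) - iL k) / h - \<mu> * vC k = 0"
    using KVL[of k] resistor[of k] KCL2[of k] inductor[of k] by simp
  then have "L * iL (k + 1) = L * iL k - R * h * iL k + h * (\<mu> - 1) * vC k"
    using \<open>h \<noteq> 0\<close> by (simp add: field_simps)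
  then have "iL (k + 1) = (L * iL k - R * h * iL k + h * (\<mu> - 1) * vC k) / L"
    using \<open>L \<noteq> 0\<close> by (metis nonzero_mult_div_cancel_left)
  also have "\<dots> = (1 - R * h / L) * iL k + (h / L) * (\<mu> - 1) * vC k"
    using \<open>L \<noteq> 0\<close> by (simp add: field_simps)
  finally show ?thesis
    using flux' v_step by (simp add: MLC_map_def)
qed

lemma Theta_MLC_MLC_map:
  assumes "C \<noteq> 0" "L \<noteq> 0" "R \<noteq> 0"
  shows "Theta_MLC C L R \<mu> qhat (MLC_map h C L R \<mu> qhat p) = Theta_MLC C L R \<mu> qhat p"
  using assms by (cases p) (simp add: MLC_map_def Theta_MLC_def field_simps)

lemma ex1_M_MLC: "\<exists>!Q0. p \<in> M_MLC C L R \<mu> qhat Q0"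
  by (simp add: M_MLC_def)

lemma MLC_map_in_M_MLC:
  assumes "C \<noteq> 0" "L \<noteq> 0" "R \<noteq> 0" and "p \<in> M_MLC C L R \<mu> qhat Q0"
  shows "MLC_map h C L R \<mu> qhat p \<in> M_MLC C L R \<mu> qhat Q0"
  using assms by (simp add: M_MLC_def Theta_MLC_MLC_map)

lemma MLC_orbit_charge:
  fixes v i \<phi> :: "nat \<Rightarrow> real"
  assumes "L \<noteq> 0" "R \<noteq> 0"
    and orbit: "\<And>k. (v (k + 1), i (k + 1), \<phi> (k + 1)) = MLC_map h C L R \<mu> qhat (v k, i k, \<phi> k)"
  shows "h * (\<Sum>j<k. i j) + (\<mu> - 1) / R * \<phi> 0 - L / R * i 0 = (\<mu> - 1) / R * \<phi> k - L / R * i k"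
proof (induction k)
  case 0
  show ?case by simp
next
  case (Suc k)
  have \<phi>_step: "\<phi> (k + 1) = \<phi> k + h * v k"
    and i_step: "i (k + 1) = (1 - R * h / L) * i k + (h / L) * (\<mu> - 1) * v k"
    using orbit[of k] by (simp_all add: MLC_map_def)
  have "h * (\<Sum>j<Suc k. i j) + (\<mu> - 1) / R * \<phi> 0 - L / R * i 0
      = (h * (\<Sum>j<k. i j) + (\<mu> - 1) / R * \<phi> 0 - L / R * i 0) + h * i k"
    by (simp add: algebra_simps)
  also have "\<dots> = (\<mu> - 1) / R * \<phi> k - L / R * i k + h * i k"
    by (simp only: Suc.IH)
  also have "\<dots> = (\<mu> - 1) / R * \<phi> (k + 1) - L / R * i (k + 1)"
    unfolding \<phi>_step i_step using \<open>L \<noteq> 0\<close> \<open>R \<noteq> 0\<close> by (simp add: field_simps)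
  finally show ?case by simp
qed

lemma MLC_orbit_reduced_map:
  fixes v i \<phi> :: "nat \<Rightarrow> real"
  assumes "C \<noteq> 0" "L \<noteq> 0" "R \<noteq> 0"
    and orbit: "\<And>k. (v (k + 1), i (k + 1), \<phi> (k + 1)) = MLC_map h C L R \<mu> qhat (v k, i k, \<phi> k)"
    and leaf: "\<And>k. (v k, i k, \<phi> k) \<in> M_MLC C L R \<mu> qhat Q0"
    and y_def: "\<And>k. y k = h * (\<Sum>j<k. i j) + (\<mu> - 1) / R * \<phi> 0 - L / R * i 0"
  shows "\<phi> (k + 1) = \<phi> k + h / C * y k - h / C * qhat (\<phi> k) + h / C * Q0"
    and "y (k + 1) = (1 - h * R / L) * y k + h / L * (\<mu> - 1) * \<phi> k"
proof -
  have "h * (\<Sum>j<n. i j) + (\<mu> - 1) / R * \<phi> 0 - L / R * i 0 = (\<mu> - 1) / R * \<phi> n - L / R * i n"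
    for n using \<open>L \<noteq> 0\<close> \<open>R \<noteq> 0\<close> orbit by (rule MLC_orbit_charge)
  then have y_state: "y n = (\<mu> - 1) / R * \<phi> n - L / R * i n" for n
    by (simp add: y_def)
  have "C * v k + L * i k / R + qhat (\<phi> k) + (1 - \<mu>) / R * \<phi> k = Q0"
    using leaf[of k] by (simp add: M_MLC_def Theta_MLC_def)
  then have Cv: "C * v k = Q0 - qhat (\<phi> k) + y k"
    using y_state[of k] by (simp add: diff_divide_distrib algebra_simps)
  have "h * v k = h / C * (C * v k)"
    using \<open>C \<noteq> 0\<close> by simp
  also have "\<dots> = h / C * (Q0 - qhat (\<phi> k) + y k)"
    by (simp only: Cv)
  moreover have "\<phi> (k + 1) = \<phi> k + h * v k"
    using orbit[of k] by (simp add: MLC_map_def)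
  ultimately show "\<phi> (k + 1) = \<phi> k + h / C * y k - h / C * qhat (\<phi> k) + h / C * Q0"
    by (simp add: algebra_simps)
  have "R * y k = (\<mu> - 1) * \<phi> k - L * i k"
    using y_state[of k] \<open>R \<noteq> 0\<close> by (simp add: right_diff_distrib)
  then have "L * i k = (\<mu> - 1) * \<phi> k - R * y k"
    by simp
  then have i_eq: "i k = ((\<mu> - 1) * \<phi> k - R * y k) / L"
    using \<open>L \<noteq> 0\<close> by (metis nonzero_mult_div_cancel_left)
  have "y (k + 1) = y k + h * i k"
    unfolding y_def by (simp add: algebra_simps)
  also have "\<dots> = (1 - h * R / L) * y k + h / L * (\<mu> - 1) * \<phi> k"
    unfolding i_eq using \<open>L \<noteq> 0\<close> by (simp add: field_simps)
  finally show "y (k + 1) = (1 - h * R / L) * y k + h / L * (\<mu> - 1) * \<phi> k" .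
qed

theorem proposition3:
  fixes C L R \<mu> h :: real and qhat :: "real \<Rightarrow> real"
    and vC iC iL vL vR iR vM iM \<phi>M :: "nat \<Rightarrow> real"
  assumes C_pos: "C > 0" and L_pos: "L > 0" and R_nz: "R \<noteq> 0" and h_pos: "h > 0"
    and capacitor: "\<And>k. iC k = C * (vC (k + 1) - vC k) / h"
    and inductor: "\<And>k. vL k = L * (iL (k + 1) - iL k) / h"
    and resistor: "\<And>k. vR k = R * iR k"
    and memristor: "\<And>k. iM k = (qhat (\<phi>M (k + 1)) - qhat (\<phi>M k)) / h"
    and flux: "\<And>k. \<phi>M (k + 1) = \<phi>M k + h * vM k"
    and KCL1: "\<And>k. iL k = iM k + iC k"
    and KCL2: "\<And>k. iL k = iR k"
    and KVL: "\<And>k. vC k + vR k + vL k - \<mu> * vC k = 0"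
    and KVL2: "\<And>k. vC k = vM k"
  shows
    \<comment> \<open>1) the circuit variables form an orbit of the 3D map\<close>
    "(\<forall>k. (vC (k + 1), iL (k + 1), \<phi>M (k + 1)) = MLC_map h C L R \<mu> qhat (vC k, iL k, \<phi>M k))
     \<comment> \<open>2) Theta_MLC is a first integral of the map for every step size\<close>
     \<and> (\<forall>h' > 0. \<forall>x :: nat \<Rightarrow> real \<times> real \<times> real.
          (\<forall>k. x (k + 1) = MLC_map h' C L R \<mu> qhat (x k)) \<longrightarrow>
          (\<forall>k. Theta_MLC C L R \<mu> qhat (x (k + 1)) = Theta_MLC C L R \<mu> qhat (x k)))
     \<comment> \<open>3a) R^3 is foliated into the invariant level sets M_MLC(Q0)\<close>
     \<and> (\<forall>p. \<exists>!Q0. p \<in> M_MLC C L R \<mu> qhat Q0)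
     \<and> (\<forall>Q0 p. p \<in> M_MLC C L R \<mu> qhat Q0 \<longrightarrow> MLC_map h C L R \<mu> qhat p \<in> M_MLC C L R \<mu> qhat Q0)
     \<comment> \<open>3b) reduction to a 2D map on each leaf\<close>
     \<and> (\<forall>Q0. \<forall>v i \<phi> :: nat \<Rightarrow> real.
          (\<forall>k. (v (k + 1), i (k + 1), \<phi> (k + 1)) = MLC_map h C L R \<mu> qhat (v k, i k, \<phi> k)) \<longrightarrow>
          (\<forall>k. (v k, i k, \<phi> k) \<in> M_MLC C L R \<mu> qhat Q0) \<longrightarrow>
          (let y = (\<lambda>k. h * (\<Sum>j<k. i j) + (\<mu> - 1) / R * \<phi> 0 - L / R * i 0) in
           \<forall>k. \<phi> (k + 1) = \<phi> k + h / C * y k - h / C * qhat (\<phi> k) + h / C * Q0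
             \<and> y (k + 1) = (1 - h * R / L) * y k + h / L * (\<mu> - 1) * \<phi> k))"
proof -
  have C_nz: "C \<noteq> 0" and L_nz: "L \<noteq> 0" and h_nz: "h \<noteq> 0"
    using C_pos L_pos h_pos by simp_all
  have circuit: "(vC (k + 1), iL (k + 1), \<phi>M (k + 1)) = MLC_map h C L R \<mu> qhat (vC k, iL k, \<phi>M k)"
    for k
    by (rule circuit_orbit_MLC_map[OF C_nz L_nz h_nz]; fact assms)
  have first_integral: "Theta_MLC C L R \<mu> qhat (x (k + 1)) = Theta_MLC C L R \<mu> qhat (x k)"
    if "\<forall>k. x (k + 1) = MLC_map h' C L R \<mu> qhat (x k)" for h' x and k :: nat
    using that Theta_MLC_MLC_map[OF C_nz L_nz R_nz] by simp
  have reduced: "\<phi> (k + 1) = \<phi> k + h / C * y k - h / C * qhat (\<phi> k) + h / C * Q0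
      \<and> y (k + 1) = (1 - h * R / L) * y k + h / L * (\<mu> - 1) * \<phi> k"
    if "\<forall>k. (v (k + 1), i (k + 1), \<phi> (k + 1)) = MLC_map h C L R \<mu> qhat (v k, i k, \<phi> k)"
      and "\<forall>k. (v k, i k, \<phi> k) \<in> M_MLC C L R \<mu> qhat Q0"
      and "y = (\<lambda>k. h * (\<Sum>j<k. i j) + (\<mu> - 1) / R * \<phi> 0 - L / R * i 0)"
    for Q0 v i \<phi> y and k :: nat
    using MLC_orbit_reduced_map[OF C_nz L_nz R_nz, of v i \<phi> h \<mu> qhat Q0 y k] that by simp
  show ?thesis
    unfolding Let_def
    using circuit first_integral ex1_M_MLC MLC_map_in_M_MLC[OF C_nz L_nz R_nz] reduced[OF _ _ refl]
    by simp
qed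

end
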